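(* Consider multi-label chaining with the naive credal classifier (NCC), as described in the context, for the $j$-th label $Y_j$, where the previous labels $Y_1,\dots,Y_{j-1}$ have already been predicted and are partitioned into index sets $\mathscr{I}_{\mathcal{R}}^{j-1}$ (predicted relevant, value $1$), $\mathscr{I}_{\mathcal{I}}^{j-1}$ (predicted irrelevant, value $0$) and $\mathscr{I}_{\mathcal{A}}^{j-1}$ (abstained). Let the imprecise-branching bounds be $$\underline{P}^{IB}(Y_j=1)=\min_{\mathbf{y}\in\{0,1\}^{|\mathscr{I}_{\mathcal{A}}^{j-1}|}}\underline{P}(Y_j=1\mid \mathbf{X}=\mathbf{x},Y_{\mathscr{I}_{\mathcal{R}}^{j-1}}=1,Y_{\mathscr{I}_{\mathcal{I}}^{j-1}}=0,Y_{\mathscr{I}_{\mathcal{A}}^{j-1}}=\mathbf{y}),$$ $$\overline{P}^{IB}(Y_j=1)=\max_{\mathbf{y}\in\{0,1\}^{|\mathscr{I}_{\mathcal{A}}^{j-1}|}}\overline{P}(Y_j=1\mid \mathbf{X}=\mathbf{x},Y_{\mathscr{I}_{\mathcal{R}}^{j-1}}=1,Y_{\mathscr{I}_{\mathcal{I}}^{j-1}}=0,Y_{\mathscr{I}_{\mathcal{A}}^{j-1}}=\mathbf{y}),$$ with the conditional lower/upper probabilities given by the NCC formulas. Then the optimization defining $\underline{P}^{IB}(Y_j=1)$ reduces to $$\max_{\mathbf{y}\in\{0,1\}^{|\mathscr{I}_{\mathcal{A}}^{j-1}|}}\frac{\overline{P}_0(Y_{\mathscr{I}_{\mathcal{A}}^{j-1}}=\mathbf{y})}{\underline{P}_1(Y_{\mathscr{I}_{\mathcal{A}}^{j-1}}=\mathbf{y})},$$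 and that defining $\overline{P}^{IB}(Y_j=1)$ reduces to $$\min_{\mathbf{y}\in\{0,1\}^{|\mathscr{I}_{\mathcal{A}}^{j-1}|}}\frac{\underline{P}_0(Y_{\mathscr{I}_{\mathcal{A}}^{j-1}}=\mathbf{y})}{\overline{P}_1(Y_{\mathscr{I}_{\mathcal{A}}^{j-1}}=\mathbf{y})},$$ in the sense that a vector $\mathbf{y}$ attains the minimum (resp. maximum) in the imprecise-branching bound if and only if it attains the maximum (resp. minimum) of the corresponding ratio. Moreover, using the imprecise Dirichlet model estimates, the values of the abstained labels solving these problems are, respectively, $$\underline{\hat{\mathbf{y}}}_{\mathscr{I}_{\mathcal{A}}^{j-1}}\in\operatorname*{arg\,max}_{\mathbf{y}\in\{0,1\}^{|\mathscr{I}_{\mathcal{A}}^{j-1}|}}\prod_{i\in\mathscr{I}_{\mathcal{A}}^{j-1}}\frac{n(y_i\mid y_j=0)+s}{n(y_i\mid y_j=1)}\quad\text{and}\quad \overline{\hat{\mathbf{y}}}_{\mathscr{I}_{\mathcal{A}}^{j-1}}\in\operatorname*{arg\,min}_{\mathbf{y}\in\{0,1\}^{|\mathscr{I}_{\mathcal{A}}^{j-1}|}}\prod_{i\in\mathscr{I}_{\mathcal{A}}^{j-1}}\frac{n(y_i\mid y_j=0)}{n(y_i\mid y_j=1)+s},$$ where $\mathbf{y}=(y_i)_{i\in\mathscr{I}_{\mathcal{A}}^{j-1}}$ and the counts $n(y_i\mid y_j=1)$ are assumed always strictly positive.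
   Context: Multi-label setting: an instance $\mathbf{x}$ has $p$ discrete features $X_1,\dots,X_p$ and $m$ binary labels $Y_1,\dots,Y_m\in\{0,1\}$; training data consists of i.i.d. pairs $(\mathbf{x}_i,\mathbf{y}_i)$. In chaining, labels are inferred in order $Y_1,\dots,Y_m$; when inferring $Y_j$, each earlier label has a prediction in $\{0,1,*\}$ ($*$ = abstention); $\mathscr{I}_{\mathcal{R}}^{j-1},\mathscr{I}_{\mathcal{I}}^{j-1},\mathscr{I}_{\mathcal{A}}^{j-1}$ partition $\{1,\dots,j-1\}$ into the indices predicted $1$, predicted $0$, and abstained. Naive credal classifier (NCC) for $Y_j$, using the features $X_1,\dots,X_p$ and the previous labels $Y_1,\dots,Y_{j-1}$ as conditionally independent attributes given $Y_j$: the marginal $P(Y_j)$ is precise, and for any attribute $Z$ and value $z$, the imprecise Dirichlet model with hyper-parameter $s>0$ gives $\underline{P}(Z=z\mid Y_j=a)=\frac{n(z\mid a)}{n(a)+s}$, $\overline{P}(Z=z\mid Y_j=a)=\frac{n(z\mid a)+s}{n(a)+s}$, where $n(z\mid a)$ counts training instances with $Z=z$ and $Y_j=a$, and $n(a)$ counts those with $Y_j=a$. For $a\in\{0,1\}$ and an index set $\mathscr{I}$ with values $\mathbf{y}$, $\overline{P}_a(\mathbf{X}=\mathbf{x})=\prod_{i=1}^p\overline{P}(X_i=x_i\mid Y_j=a)$, $\overline{P}_a(Y_{\mathscr{I}}=\mathbf{y})=\prod_{k\in\mathscr{I}}\overline{P}(Y_k=y_k\mid Y_j=a)$, and analogously for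 lower probabilities $\underline{P}_a$. The conditional bounds are $$\underline{P}(Y_j=1\mid \mathbf{X}=\mathbf{x},Y_{\mathscr{I}^{j-1}}=\hat{\mathbf{y}})=\Big(1+\frac{P(Y_j=0)\overline{P}_0(\mathbf{X}=\mathbf{x})\overline{P}_0(Y_{\mathscr{I}^{j-1}}=\hat{\mathbf{y}})}{P(Y_j=1)\underline{P}_1(\mathbf{X}=\mathbf{x})\underline{P}_1(Y_{\mathscr{I}^{j-1}}=\hat{\mathbf{y}})}\Big)^{-1},$$ $$\overline{P}(Y_j=1\mid \mathbf{X}=\mathbf{x},Y_{\mathscr{I}^{j-1}}=\hat{\mathbf{y}})=\Big(1+\frac{P(Y_j=0)\underline{P}_0(\mathbf{X}=\mathbf{x})\underline{P}_0(Y_{\mathscr{I}^{j-1}}=\hat{\mathbf{y}})}{P(Y_j=1)\overline{P}_1(\mathbf{X}=\mathbf{x})\overline{P}_1(Y_{\mathscr{I}^{j-1}}=\hat{\mathbf{y}})}\Big)^{-1},$$ where $\mathscr{I}^{j-1}=\{1,\dots,j-1\}$ and $\hat{\mathbf{y}}$ is a full binary assignment of the previous labels. *)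

theory Defs
  imports Complex_Main
begin

text \<open>Training data: a list of pairs (x, y); features x i (i < p) take values in 'v,
  labels y k (1 \<le> k \<le> m) are binary (True = 1, False = 0).\<close>
type_synonym 'v data = "((nat \<Rightarrow> 'v) \<times> (nat \<Rightarrow> bool)) list"

definition n_cls :: "'v data \<Rightarrow> nat \<Rightarrow> bool \<Rightarrow> nat" where
  "n_cls D j a = length (filter (\<lambda>(x, y). y j = a) D)"

definition n_feat :: "'v data \<Rightarrow> nat \<Rightarrow> nat \<Rightarrow> 'v \<Rightarrow> bool \<Rightarrow> nat" where
  "n_feat D j i z a = length (filter (\<lambda>(x, y). x i = z \<and> y j = a) D)"

definition n_lab :: "'v data \<Rightarrow> nat \<Rightarrow> nat \<Rightarrow> bool \<Rightarrow> bool \<Rightarrow> nat" where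
  "n_lab D j k z a = length (filter (\<lambda>(x, y). y k = z \<and> y j = a) D)"

definition P_cls :: "'v data \<Rightarrow> nat \<Rightarrow> bool \<Rightarrow> real" where
  "P_cls D j a = real (n_cls D j a) / real (length D)"

definition lowP_feat :: "'v data \<Rightarrow> real \<Rightarrow> nat \<Rightarrow> nat \<Rightarrow> 'v \<Rightarrow> bool \<Rightarrow> real" where
  "lowP_feat D s j i z a = real (n_feat D j i z a) / (real (n_cls D j a) + s)"
definition upP_feat :: "'v data \<Rightarrow> real \<Rightarrow> nat \<Rightarrow> nat \<Rightarrow> 'v \<Rightarrow> bool \<Rightarrow> real" where
  "upP_feat D s j i z a = (real (n_feat D j i z a) + s) / (real (n_cls D j a) + s)"
definition lowP_lab :: "'v data \<Rightarrow> real \<Rightarrow> nat \<Rightarrow> nat \<Rightarrow> bool \<Rightarrow> bool \<Rightarrow> real" where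
  "lowP_lab D s j k z a = real (n_lab D j k z a) / (real (n_cls D j a) + s)"
definition upP_lab :: "'v data \<Rightarrow> real \<Rightarrow> nat \<Rightarrow> nat \<Rightarrow> bool \<Rightarrow> bool \<Rightarrow> real" where
  "upP_lab D s j k z a = (real (n_lab D j k z a) + s) / (real (n_cls D j a) + s)"

definition lowP_X :: "'v data \<Rightarrow> real \<Rightarrow> nat \<Rightarrow> nat \<Rightarrow> (nat \<Rightarrow> 'v) \<Rightarrow> bool \<Rightarrow> real" where
  "lowP_X D s j p x a = (\<Prod>i<p. lowP_feat D s j i (x i) a)"
definition upP_X :: "'v data \<Rightarrow> real \<Rightarrow> nat \<Rightarrow> nat \<Rightarrow> (nat \<Rightarrow> 'v) \<Rightarrow> bool \<Rightarrow> real" where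
  "upP_X D s j p x a = (\<Prod>i<p. upP_feat D s j i (x i) a)"

definition lowP_Y :: "'v data \<Rightarrow> real \<Rightarrow> nat \<Rightarrow> nat set \<Rightarrow> (nat \<Rightarrow> bool) \<Rightarrow> bool \<Rightarrow> real" where
  "lowP_Y D s j I yv a = (\<Prod>k\<in>I. lowP_lab D s j k (yv k) a)"
definition upP_Y :: "'v data \<Rightarrow> real \<Rightarrow> nat \<Rightarrow> nat set \<Rightarrow> (nat \<Rightarrow> bool) \<Rightarrow> bool \<Rightarrow> real" where
  "upP_Y D s j I yv a = (\<Prod>k\<in>I. upP_lab D s j k (yv k) a)"

definition lowP_cond :: "'v data \<Rightarrow> real \<Rightarrow> nat \<Rightarrow> nat \<Rightarrow> (nat \<Rightarrow> 'v) \<Rightarrow> (nat \<Rightarrow> bool) \<Rightarrow> real" where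
  "lowP_cond D s j p x yv = inverse (1 +
     (P_cls D j False * upP_X D s j p x False * upP_Y D s j {1..<j} yv False) /
     (P_cls D j True * lowP_X D s j p x True * lowP_Y D s j {1..<j} yv True))"
definition upP_cond :: "'v data \<Rightarrow> real \<Rightarrow> nat \<Rightarrow> nat \<Rightarrow> (nat \<Rightarrow> 'v) \<Rightarrow> (nat \<Rightarrow> bool) \<Rightarrow> real" where
  "upP_cond D s j p x yv = inverse (1 +
     (P_cls D j False * lowP_X D s j p x False * lowP_Y D s j {1..<j} yv False) /
     (P_cls D j True * upP_X D s j p x True * upP_Y D s j {1..<j} yv True))"

text \<open>Binary assignments to the indices in A (a copy of {0,1}^|A|, extensional: False outside A)\<close>
definition assign :: "nat set \<Rightarrow> (nat \<Rightarrow> bool) set" where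
  "assign A = {y. \<forall>k. k \<notin> A \<longrightarrow> y k = False}"

text \<open>Full assignment of previous labels: 1 on IR, 0 on II, y on IA\<close>
definition combine :: "nat set \<Rightarrow> nat set \<Rightarrow> (nat \<Rightarrow> bool) \<Rightarrow> nat \<Rightarrow> bool" where
  "combine IR IA y k = (if k \<in> IA then y k else k \<in> IR)"

definition lowP_IB :: "'v data \<Rightarrow> real \<Rightarrow> nat \<Rightarrow> nat \<Rightarrow> (nat \<Rightarrow> 'v) \<Rightarrow> nat set \<Rightarrow> nat set \<Rightarrow> real" where
  "lowP_IB D s j p x IR IA = Min ((\<lambda>y. lowP_cond D s j p x (combine IR IA y)) ` assign IA)"
definition upP_IB :: "'v data \<Rightarrow> real \<Rightarrow> nat \<Rightarrow> nat \<Rightarrow> (nat \<Rightarrow> 'v) \<Rightarrow> nat set \<Rightarrow> nat set \<Rightarrow> real" where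
  "upP_IB D s j p x IR IA = Max ((\<lambda>y. upP_cond D s j p x (combine IR IA y)) ` assign IA)"

end

theory Submission
  imports Defs
begin

text \<open>Splitting the previous labels into the observed ones and the abstained set \<open>IA\<close>, the
  NCC bounds take the form \<open>1 / (1 + C * r y)\<close>, where \<open>C > 0\<close> depends only on the observed
  part and \<open>r y\<close> is the ratio of upper to lower (resp. lower to upper) label likelihoods on \<open>IA\<close>.
  Since \<open>t \<mapsto> 1 / (1 + C * t)\<close> is strictly decreasing on \<open>t \<ge> 0\<close>, minimising the lower bound
  (maximising the upper bound) means maximising (minimising) \<open>r\<close>. Under the IDM all class
  denominators cancel up to the constant factor \<open>((n(1) + s) / (n(0) + s)) ^ |IA|\<close>, which leaves
  the product of count ratios.\<close>

lemma eq_Min_image_iff: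
  fixes f :: "'a \<Rightarrow> 'b::linorder"
  assumes "finite S" "y \<in> S"
  shows "f y = Min (f ` S) \<longleftrightarrow> (\<forall>z\<in>S. f y \<le> f z)"
  using assms by (auto intro: Min_eqI[symmetric])

lemma eq_Max_image_iff:
  fixes f :: "'a \<Rightarrow> 'b::linorder"
  assumes "finite S" "y \<in> S"
  shows "f y = Max (f ` S) \<longleftrightarrow> (\<forall>z\<in>S. f z \<le> f y)"
  using assms by (auto intro: Max_eqI[symmetric])

lemma arg_min_iff_arg_max_antitone:
  fixes f g :: "'a \<Rightarrow> 'b::linorder"
  assumes "finite S" "y \<in> S" "\<And>z w. z \<in> S \<Longrightarrow> w \<in> S \<Longrightarrow> f z \<le> f w \<longleftrightarrow> g w \<le> g z"
  shows "f y = Min (f ` S) \<longleftrightarrow> g y = Max (g ` S)"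
  using assms by (simp add: eq_Min_image_iff eq_Max_image_iff)

lemma arg_max_iff_arg_min_antitone:
  fixes f g :: "'a \<Rightarrow> 'b::linorder"
  assumes "finite S" "y \<in> S" "\<And>z w. z \<in> S \<Longrightarrow> w \<in> S \<Longrightarrow> f z \<le> f w \<longleftrightarrow> g w \<le> g z"
  shows "f y = Max (f ` S) \<longleftrightarrow> g y = Min (g ` S)"
  using assms by (simp add: eq_Min_image_iff eq_Max_image_iff)

lemma arg_max_iff_arg_max_mono:
  fixes f g :: "'a \<Rightarrow> 'b::linorder"
  assumes "finite S" "y \<in> S" "\<And>z w. z \<in> S \<Longrightarrow> w \<in> S \<Longrightarrow> f z \<le> f w \<longleftrightarrow> g z \<le> g w"
  shows "f y = Max (f ` S) \<longleftrightarrow> g y = Max (g ` S)"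
  using assms by (simp add: eq_Max_image_iff)

lemma arg_min_iff_arg_min_mono:
  fixes f g :: "'a \<Rightarrow> 'b::linorder"
  assumes "finite S" "y \<in> S" "\<And>z w. z \<in> S \<Longrightarrow> w \<in> S \<Longrightarrow> f z \<le> f w \<longleftrightarrow> g z \<le> g w"
  shows "f y = Min (f ` S) \<longleftrightarrow> g y = Min (g ` S)"
  using assms by (simp add: eq_Min_image_iff)

lemma inverse_one_plus_mult_le_iff:
  fixes C a b :: real
  assumes "C > 0" "a \<ge> 0" "b \<ge> 0"
  shows "inverse (1 + C * a) \<le> inverse (1 + C * b) \<longleftrightarrow> b \<le> a"
proof -
  have "1 + C * a > 0" "1 + C * b > 0"
    using assms by (simp_all add: add_pos_nonneg)
  then show ?thesis using assms(1) by simp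
qed

lemma finite_assign: "finite A \<Longrightarrow> finite (assign A)"
  using finite_set_of_finite_funs[of A "UNIV :: bool set" False] by (simp add: assign_def)

lemma assign_empty: "assign {} = {\<lambda>_. False}"
  unfolding assign_def by auto

lemma n_lab_le_n_cls: "n_lab D j k v a \<le> n_cls D j a"
  unfolding n_lab_def n_cls_def by (induction D) auto

lemma P_cls_pos:
  assumes "n_cls D j a > 0"
  shows "P_cls D j a > 0"
proof -
  have "n_cls D j a \<le> length D"
    unfolding n_cls_def by (rule length_filter_le)
  then have "length D > 0" using assms by linarith
  then show ?thesis using assms unfolding P_cls_def by simp
qed

lemma lowP_lab_nonneg: "s \<ge> 0 \<Longrightarrow> lowP_lab D s j k z a \<ge> 0"
  unfolding lowP_lab_def by simp

lemma lowP_lab_pos: "s > 0 \<Longrightarrow> n_lab D j k z a > 0 \<Longrightarrow> lowP_lab D s j k z a > 0"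
  unfolding lowP_lab_def by (simp add: add_nonneg_pos)

lemma upP_lab_pos: "s > 0 \<Longrightarrow> upP_lab D s j k z a > 0"
  unfolding upP_lab_def by (simp add: add_nonneg_pos)

lemma lowP_feat_pos: "s > 0 \<Longrightarrow> n_feat D j i z a > 0 \<Longrightarrow> lowP_feat D s j i z a > 0"
  unfolding lowP_feat_def by (simp add: add_nonneg_pos)

lemma upP_feat_pos: "s > 0 \<Longrightarrow> upP_feat D s j i z a > 0"
  unfolding upP_feat_def by (simp add: add_nonneg_pos)

lemma lowP_Y_nonneg: "s \<ge> 0 \<Longrightarrow> lowP_Y D s j A y a \<ge> 0"
  unfolding lowP_Y_def by (simp add: prod_nonneg lowP_lab_nonneg)

lemma lowP_Y_pos: "s > 0 \<Longrightarrow> \<forall>k\<in>A. n_lab D j k (y k) a > 0 \<Longrightarrow> lowP_Y D s j A y a > 0"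
  unfolding lowP_Y_def by (simp add: prod_pos lowP_lab_pos)

lemma upP_Y_pos: "s > 0 \<Longrightarrow> upP_Y D s j A y a > 0"
  unfolding upP_Y_def by (simp add: prod_pos upP_lab_pos)

lemma lowP_X_pos: "s > 0 \<Longrightarrow> \<forall>i<p. n_feat D j i (x i) a > 0 \<Longrightarrow> lowP_X D s j p x a > 0"
  unfolding lowP_X_def by (auto intro!: prod_pos lowP_feat_pos)

lemma upP_X_pos: "s > 0 \<Longrightarrow> upP_X D s j p x a > 0"
  unfolding upP_X_def by (simp add: prod_pos upP_feat_pos)

lemma prod_combine:
  assumes "finite B" "IA \<subseteq> B"
  shows "(\<Prod>k\<in>B. f k (combine IR IA y k)) = (\<Prod>k\<in>B - IA. f k (k \<in> IR)) * (\<Prod>k\<in>IA. f k (y k))"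
proof -
  have "(\<Prod>k\<in>B. f k (combine IR IA y k))
      = (\<Prod>k\<in>B - IA. f k (combine IR IA y k)) * (\<Prod>k\<in>IA. f k (combine IR IA y k))"
    using assms by (simp add: prod.subset_diff)
  then show ?thesis by (simp add: combine_def)
qed

lemma lowP_Y_combine:
  "finite B \<Longrightarrow> IA \<subseteq> B \<Longrightarrow>
   lowP_Y D s j B (combine IR IA y) a = lowP_Y D s j (B - IA) (\<lambda>k. k \<in> IR) a * lowP_Y D s j IA y a"
  unfolding lowP_Y_def by (rule prod_combine)

lemma upP_Y_combine:
  "finite B \<Longrightarrow> IA \<subseteq> B \<Longrightarrow>
   upP_Y D s j B (combine IR IA y) a = upP_Y D s j (B - IA) (\<lambda>k. k \<in> IR) a * upP_Y D s j IA y a"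
  unfolding upP_Y_def by (rule prod_combine)

lemma divide_divide_swap: "(a::'a::field) / b / (c / d) = d / b * (a / c)"
  by (simp add: divide_inverse mult_ac)

lemma upP_Y_lowP_Y_ratio:
  "upP_Y D s j A y False / lowP_Y D s j A y True
   = ((real (n_cls D j True) + s) / (real (n_cls D j False) + s)) ^ card A
     * (\<Prod>i\<in>A. (real (n_lab D j i (y i) False) + s) / real (n_lab D j i (y i) True))"
  unfolding upP_Y_def lowP_Y_def upP_lab_def lowP_lab_def
  unfolding prod_dividef[symmetric] divide_divide_swap prod.distrib prod_constant ..

lemma lowP_Y_upP_Y_ratio:
  "lowP_Y D s j A y False / upP_Y D s j A y True
   = ((real (n_cls D j True) + s) / (real (n_cls D j False) + s)) ^ card A
     * (\<Prod>i\<in>A. real (n_lab D j i (y i) False) / (real (n_lab D j i (y i) True) + s))"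
  unfolding upP_Y_def lowP_Y_def upP_lab_def lowP_lab_def
  unfolding prod_dividef[symmetric] divide_divide_swap prod.distrib prod_constant ..

lemma lowP_cond_combine:
  assumes "IA \<subseteq> {1..<j}"
  shows "lowP_cond D s j p x (combine IR IA y)
    = inverse (1 + P_cls D j False * upP_X D s j p x False * upP_Y D s j ({1..<j} - IA) (\<lambda>k. k \<in> IR) False
                   / (P_cls D j True * lowP_X D s j p x True * lowP_Y D s j ({1..<j} - IA) (\<lambda>k. k \<in> IR) True)
                   * (upP_Y D s j IA y False / lowP_Y D s j IA y True))"
  unfolding lowP_cond_def lowP_Y_combine[OF finite_atLeastLessThan assms]
    upP_Y_combine[OF finite_atLeastLessThan assms]
  by (simp add: times_divide_times_eq mult.assoc)

lemma upP_cond_combine: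
  assumes "IA \<subseteq> {1..<j}"
  shows "upP_cond D s j p x (combine IR IA y)
    = inverse (1 + P_cls D j False * lowP_X D s j p x False * lowP_Y D s j ({1..<j} - IA) (\<lambda>k. k \<in> IR) False
                   / (P_cls D j True * upP_X D s j p x True * upP_Y D s j ({1..<j} - IA) (\<lambda>k. k \<in> IR) True)
                   * (lowP_Y D s j IA y False / upP_Y D s j IA y True))"
  unfolding upP_cond_def lowP_Y_combine[OF finite_atLeastLessThan assms]
    upP_Y_combine[OF finite_atLeastLessThan assms]
  by (simp add: times_divide_times_eq mult.assoc)

lemma lowP_IB_attained_iff:
  assumes "s > 0" "IA \<subseteq> {1..<j}" "y \<in> assign IA"
    and "n_cls D j False > 0" "n_cls D j True > 0"
    and "\<forall>i<p. n_feat D j i (x i) True > 0"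
    and "\<forall>k\<in>{1..<j} - IA. n_lab D j k (k \<in> IR) True > 0"
  shows "lowP_cond D s j p x (combine IR IA y) = lowP_IB D s j p x IR IA
           \<longleftrightarrow> upP_Y D s j IA y False / lowP_Y D s j IA y True
               = Max ((\<lambda>z. upP_Y D s j IA z False / lowP_Y D s j IA z True) ` assign IA)"
      (is "?attained \<longleftrightarrow> ?ratio_max")
    and "lowP_cond D s j p x (combine IR IA y) = lowP_IB D s j p x IR IA
           \<longleftrightarrow> (\<Prod>i\<in>IA. (real (n_lab D j i (y i) False) + s) / real (n_lab D j i (y i) True))
               = Max ((\<lambda>z. \<Prod>i\<in>IA. (real (n_lab D j i (z i) False) + s) / real (n_lab D j i (z i) True))
                        ` assign IA)"
      (is "_ \<longleftrightarrow> ?counts_max")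
proof -
  let ?r = "\<lambda>z. upP_Y D s j IA z False / lowP_Y D s j IA z True"
  let ?q = "\<lambda>z. \<Prod>i\<in>IA. (real (n_lab D j i (z i) False) + s) / real (n_lab D j i (z i) True)"
  define C where "C = P_cls D j False * upP_X D s j p x False * upP_Y D s j ({1..<j} - IA) (\<lambda>k. k \<in> IR) False
                   / (P_cls D j True * lowP_X D s j p x True * lowP_Y D s j ({1..<j} - IA) (\<lambda>k. k \<in> IR) True)"
  define K where "K = ((real (n_cls D j True) + s) / (real (n_cls D j False) + s)) ^ card IA"
  have fin: "finite (assign IA)"
    using assms(2) by (simp add: finite_assign finite_subset)
  have C_pos: "C > 0"
    unfolding C_def using assms
    by (auto intro!: divide_pos_pos mult_pos_pos P_cls_pos upP_X_pos upP_Y_pos lowP_X_pos lowP_Y_pos)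
  have r_nonneg: "?r z \<ge> 0" for z
    using assms(1) by (simp add: lowP_Y_nonneg upP_Y_pos less_imp_le)
  have "lowP_cond D s j p x (combine IR IA z) \<le> lowP_cond D s j p x (combine IR IA w)
      \<longleftrightarrow> ?r w \<le> ?r z" for z w
    unfolding lowP_cond_combine[OF assms(2)] C_def[symmetric]
    using C_pos r_nonneg by (intro inverse_one_plus_mult_le_iff)
  then show min_iff_r: "?attained \<longleftrightarrow> ?ratio_max"
    unfolding lowP_IB_def by (intro arg_min_iff_arg_max_antitone[OF fin assms(3)])
  have "K > 0"
    unfolding K_def using assms(1) by (simp add: add_nonneg_pos)
  then have "?r z \<le> ?r w \<longleftrightarrow> ?q z \<le> ?q w" for z w
    unfolding upP_Y_lowP_Y_ratio K_def[symmetric] by simp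
  then have "?ratio_max \<longleftrightarrow> ?counts_max"
    by (intro arg_max_iff_arg_max_mono[OF fin assms(3)])
  with min_iff_r show "?attained \<longleftrightarrow> ?counts_max" by simp
qed

lemma upP_IB_attained_iff:
  assumes "s > 0" "IA \<subseteq> {1..<j}" "y \<in> assign IA"
    and "n_cls D j False > 0" "n_cls D j True > 0"
    and "\<forall>i<p. n_feat D j i (x i) False > 0"
    and "\<forall>k\<in>{1..<j} - IA. n_lab D j k (k \<in> IR) False > 0"
  shows "upP_cond D s j p x (combine IR IA y) = upP_IB D s j p x IR IA
           \<longleftrightarrow> lowP_Y D s j IA y False / upP_Y D s j IA y True
               = Min ((\<lambda>z. lowP_Y D s j IA z False / upP_Y D s j IA z True) ` assign IA)"
      (is "?attained \<longleftrightarrow> ?ratio_min")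
    and "upP_cond D s j p x (combine IR IA y) = upP_IB D s j p x IR IA
           \<longleftrightarrow> (\<Prod>i\<in>IA. real (n_lab D j i (y i) False) / (real (n_lab D j i (y i) True) + s))
               = Min ((\<lambda>z. \<Prod>i\<in>IA. real (n_lab D j i (z i) False) / (real (n_lab D j i (z i) True) + s))
                        ` assign IA)"
      (is "_ \<longleftrightarrow> ?counts_min")
proof -
  let ?r = "\<lambda>z. lowP_Y D s j IA z False / upP_Y D s j IA z True"
  let ?q = "\<lambda>z. \<Prod>i\<in>IA. real (n_lab D j i (z i) False) / (real (n_lab D j i (z i) True) + s)"
  define C where "C = P_cls D j False * lowP_X D s j p x False * lowP_Y D s j ({1..<j} - IA) (\<lambda>k. k \<in> IR) False
                   / (P_cls D j True * upP_X D s j p x True * upP_Y D s j ({1..<j} - IA) (\<lambda>k. k \<in> IR) True)"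
  define K where "K = ((real (n_cls D j True) + s) / (real (n_cls D j False) + s)) ^ card IA"
  have fin: "finite (assign IA)"
    using assms(2) by (simp add: finite_assign finite_subset)
  have C_pos: "C > 0"
    unfolding C_def using assms
    by (auto intro!: divide_pos_pos mult_pos_pos P_cls_pos upP_X_pos upP_Y_pos lowP_X_pos lowP_Y_pos)
  have r_nonneg: "?r z \<ge> 0" for z
    using assms(1) by (simp add: lowP_Y_nonneg upP_Y_pos less_imp_le)
  have "upP_cond D s j p x (combine IR IA z) \<le> upP_cond D s j p x (combine IR IA w)
      \<longleftrightarrow> ?r w \<le> ?r z" for z w
    unfolding upP_cond_combine[OF assms(2)] C_def[symmetric]
    using C_pos r_nonneg by (intro inverse_one_plus_mult_le_iff)
  then show max_iff_r: "?attained \<longleftrightarrow> ?ratio_min"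
    unfolding upP_IB_def by (intro arg_max_iff_arg_min_antitone[OF fin assms(3)])
  have "K > 0"
    unfolding K_def using assms(1) by (simp add: add_nonneg_pos)
  then have "?r z \<le> ?r w \<longleftrightarrow> ?q z \<le> ?q w" for z w
    unfolding lowP_Y_upP_Y_ratio K_def[symmetric] by simp
  then have "?ratio_min \<longleftrightarrow> ?counts_min"
    by (intro arg_min_iff_arg_min_mono[OF fin assms(3)])
  with max_iff_r show "?attained \<longleftrightarrow> ?counts_min" by simp
qed

theorem proposition1:
  fixes D :: "'v data" and s :: real and p m j :: nat and x :: "nat \<Rightarrow> 'v"
    and IR II IA :: "nat set"
  assumes s_pos: "s > 0"
    and j_range: "1 \<le> j" "j \<le> m"
    and partition: "IR \<union> II \<union> IA = {1..<j}" "IR \<inter> II = {}" "IR \<inter> IA = {}" "II \<inter> IA = {}"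
    and pos_lab1: "\<forall>k\<in>{1..<j}. \<forall>v. n_lab D j k v True > 0"
    and pos_feat: "\<forall>i<p. n_feat D j i (x i) True > 0 \<and> n_feat D j i (x i) False > 0"
    and pos_obs0: "\<forall>k\<in>IR \<union> II. n_lab D j k (k \<in> IR) False > 0"
    and pos_cls0: "n_cls D j False > 0"
  shows
   "(\<forall>y\<in>assign IA.
       (lowP_cond D s j p x (combine IR IA y) = lowP_IB D s j p x IR IA
         \<longleftrightarrow> upP_Y D s j IA y False / lowP_Y D s j IA y True
             = Max ((\<lambda>z. upP_Y D s j IA z False / lowP_Y D s j IA z True) ` assign IA))
     \<and> (lowP_cond D s j p x (combine IR IA y) = lowP_IB D s j p x IR IA
         \<longleftrightarrow> (\<Prod>i\<in>IA. (real (n_lab D j i (y i) False) + s) / real (n_lab D j i (y i) True))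
             = Max ((\<lambda>z. \<Prod>i\<in>IA. (real (n_lab D j i (z i) False) + s) / real (n_lab D j i (z i) True))
                      ` assign IA)))
  \<and> (\<forall>y\<in>assign IA.
       (upP_cond D s j p x (combine IR IA y) = upP_IB D s j p x IR IA
         \<longleftrightarrow> lowP_Y D s j IA y False / upP_Y D s j IA y True
             = Min ((\<lambda>z. lowP_Y D s j IA z False / upP_Y D s j IA z True) ` assign IA))
     \<and> (upP_cond D s j p x (combine IR IA y) = upP_IB D s j p x IR IA
         \<longleftrightarrow> (\<Prod>i\<in>IA. real (n_lab D j i (y i) False) / (real (n_lab D j i (y i) True) + s))
             = Min ((\<lambda>z. \<Prod>i\<in>IA. real (n_lab D j i (z i) False) / (real (n_lab D j i (z i) True) + s))
                      ` assign IA)))"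
proof (cases "IA = {}")
  case True
  then show ?thesis by (simp add: assign_empty lowP_IB_def upP_IB_def)
next
  case False
  have IA: "IA \<subseteq> {1..<j}" and observed: "{1..<j} - IA \<subseteq> IR \<union> II"
    using partition by blast+
  from False obtain k where "k \<in> IA" by blast
  then have "0 < n_lab D j k True True" using pos_lab1 IA by blast
  also have "\<dots> \<le> n_cls D j True" by (rule n_lab_le_n_cls)
  finally have pos_cls1: "n_cls D j True > 0" .
  have obs1: "\<forall>k\<in>{1..<j} - IA. n_lab D j k (k \<in> IR) True > 0"
    using pos_lab1 by simp
  have obs0: "\<forall>k\<in>{1..<j} - IA. n_lab D j k (k \<in> IR) False > 0"
    using pos_obs0 observed by blast
  have feat1: "\<forall>i<p. n_feat D j i (x i) True > 0" and feat0: "\<forall>i<p. n_feat D j i (x i) False > 0"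
    using pos_feat by simp_all
  show ?thesis
    using lowP_IB_attained_iff[OF s_pos IA _ pos_cls0 pos_cls1 feat1 obs1]
      upP_IB_attained_iff[OF s_pos IA _ pos_cls0 pos_cls1 feat0 obs0]
    by blast
qed

end
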